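(* Let $n$ be odd. Then $|RELS(n)|\neq|ROLS(n)|$ if and only if $$\sum_{0\le k,m<n/2}(-1)^{k+m}(n-2k)(n-2m)N_n(k,m)\neq0,$$ where $N_n(k,m)$ is the number of reduced Latin squares of order $n$ of parity type $(k,m)$.
   Context: A Latin square of order $n$ is an $n\times n$ array with entries in $[n]$, each symbol once in each row and column. Rows and columns are viewed as permutations: if symbol $i$ appears in the $j$th place of a row (column) $\sigma$, then $\sigma(i)=j$. $L$ is reduced if its first row and first column are the identity permutation. $\mathrm{par}(L)$ is the product of the signs of all rows and columns; $L$ is even if $\mathrm{par}(L)=1$ and odd if $\mathrm{par}(L)=-1$. $RELS(n)$ and $ROLS(n)$ denote the sets of even and odd reduced Latin squares of order $n$. The parity type of $L$ is $(k,m)$, $0\le k,m\le n/2$, if $k$ of its rows have one sign and the other $n-k$ rows the opposite sign, and $m$ of its columns have one sign and the other $n-m$ columns the opposite sign. *)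

theory Defs
  imports "HOL-Combinatorics.Permutations" "HOL-Library.FuncSet"
begin

text \<open>Latin squares of order n, with rows, columns and symbols indexed by
  {0..<n} (0-based version of [n]).\<close>

definition latin_square :: "nat \<Rightarrow> (nat \<times> nat \<Rightarrow> nat) \<Rightarrow> bool" where
  "latin_square n L \<longleftrightarrow>
     L \<in> ({0..<n} \<times> {0..<n}) \<rightarrow>\<^sub>E {0..<n} \<and>
     (\<forall>r<n. bij_betw (\<lambda>j. L (r, j)) {0..<n} {0..<n}) \<and>
     (\<forall>c<n. bij_betw (\<lambda>i. L (i, c)) {0..<n} {0..<n})"

definition row_perm :: "nat \<Rightarrow> (nat \<times> nat \<Rightarrow> nat) \<Rightarrow> nat \<Rightarrow> nat \<Rightarrow> nat" where
  "row_perm n L r = (\<lambda>s. if s < n then (THE j. j < n \<and> L (r, j) = s) else s)"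

definition col_perm :: "nat \<Rightarrow> (nat \<times> nat \<Rightarrow> nat) \<Rightarrow> nat \<Rightarrow> nat \<Rightarrow> nat" where
  "col_perm n L c = (\<lambda>s. if s < n then (THE i. i < n \<and> L (i, c) = s) else s)"

definition reduced :: "nat \<Rightarrow> (nat \<times> nat \<Rightarrow> nat) \<Rightarrow> bool" where
  "reduced n L \<longleftrightarrow> (\<forall>j<n. L (0, j) = j) \<and> (\<forall>i<n. L (i, 0) = i)"

definition reduced_latin_squares :: "nat \<Rightarrow> (nat \<times> nat \<Rightarrow> nat) set" where
  "reduced_latin_squares n = {L. latin_square n L \<and> reduced n L}"

definition par :: "nat \<Rightarrow> (nat \<times> nat \<Rightarrow> nat) \<Rightarrow> int" where
  "par n L = (\<Prod>r<n. sign (row_perm n L r)) * (\<Prod>c<n. sign (col_perm n L c))"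

definition RELS :: "nat \<Rightarrow> (nat \<times> nat \<Rightarrow> nat) set" where
  "RELS n = {L \<in> reduced_latin_squares n. par n L = 1}"

definition ROLS :: "nat \<Rightarrow> (nat \<times> nat \<Rightarrow> nat) set" where
  "ROLS n = {L \<in> reduced_latin_squares n. par n L = -1}"

definition parity_type :: "nat \<Rightarrow> (nat \<times> nat \<Rightarrow> nat) \<Rightarrow> nat \<Rightarrow> nat \<Rightarrow> bool" where
  "parity_type n L k m \<longleftrightarrow> 2 * k \<le> n \<and> 2 * m \<le> n \<and>
     (card {r. r < n \<and> sign (row_perm n L r) = 1} = k \<or>
      card {r. r < n \<and> sign (row_perm n L r) = 1} = n - k) \<and>
     (card {c. c < n \<and> sign (col_perm n L c) = 1} = m \<or>
      card {c. c < n \<and> sign (col_perm n L c) = 1} = n - m)"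

definition N :: "nat \<Rightarrow> nat \<Rightarrow> nat \<Rightarrow> nat" where
  "N n k m = card {L \<in> reduced_latin_squares n. parity_type n L k m}"

end

theory Submission
  imports Defs
begin

text \<open>Given a reduced Latin square \<open>R\<close> and a cell \<open>(i, j)\<close>, relabel the symbols by the
  transposition of \<open>0\<close> and \<open>R (i, j)\<close> and permute rows and columns so that the cell becomes
  the origin; the result is again reduced. This recentring is an involution on triples
  \<open>(R, i, j)\<close>, and for odd \<open>n\<close> it multiplies the parity by the signs of row \<open>i\<close> and
  column \<open>j\<close>. Summing the parity over all triples in two ways gives
  \<open>n\<^sup>2 (|RELS(n)| - |ROLS(n)|) = \<Sum>\<^sub>R par(R) (\<Sum>\<^sub>i sign(row\<^sub>i)) (\<Sum>\<^sub>j sign(col\<^sub>j))\<close>,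
  and a square of parity type \<open>(k, m)\<close> contributes \<open>(-1)\<^sup>k (n - 2k) (-1)\<^sup>m (n - 2m)\<close>
  to the right-hand side.\<close>

lemma latin_square_row_bij:
  "latin_square n L \<Longrightarrow> r < n \<Longrightarrow> bij_betw (\<lambda>j. L (r, j)) {0..<n} {0..<n}"
  by (simp add: latin_square_def)

lemma latin_square_col_bij:
  "latin_square n L \<Longrightarrow> c < n \<Longrightarrow> bij_betw (\<lambda>i. L (i, c)) {0..<n} {0..<n}"
  by (simp add: latin_square_def)

lemma latin_square_less: "latin_square n L \<Longrightarrow> a < n \<Longrightarrow> b < n \<Longrightarrow> L (a, b) < n"
  unfolding latin_square_def by (auto simp: PiE_def Pi_def)

lemma latin_square_undefined:
  "latin_square n L \<Longrightarrow> \<not> (a < n \<and> b < n) \<Longrightarrow> L (a, b) = undefined"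
  unfolding latin_square_def PiE_def extensional_def by auto

lemma row_perm_eqI:
  assumes L: "latin_square n L" and "r < n" "j < n" "L (r, j) = s"
  shows "row_perm n L r s = j"
proof -
  have "inj_on (\<lambda>j. L (r, j)) {0..<n}"
    using latin_square_row_bij[OF L \<open>r < n\<close>] by (rule bij_betw_imp_inj_on)
  then have "(THE j'. j' < n \<and> L (r, j') = s) = j"
    using assms by (intro the_equality) (auto simp: inj_on_def)
  then show ?thesis
    using latin_square_less[OF L \<open>r < n\<close> \<open>j < n\<close>] assms(4) by (simp add: row_perm_def)
qed

lemma col_perm_eqI:
  assumes L: "latin_square n L" and "c < n" "i < n" "L (i, c) = s"
  shows "col_perm n L c s = i"
proof -
  have "inj_on (\<lambda>i. L (i, c)) {0..<n}"
    using latin_square_col_bij[OF L \<open>c < n\<close>] by (rule bij_betw_imp_inj_on)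
  then have "(THE i'. i' < n \<and> L (i', c) = s) = i"
    using assms by (intro the_equality) (auto simp: inj_on_def)
  then show ?thesis
    using latin_square_less[OF L \<open>i < n\<close> \<open>c < n\<close>] assms(4) by (simp add: col_perm_def)
qed

lemma row_perm_spec:
  assumes L: "latin_square n L" and "r < n" "s < n"
  shows "row_perm n L r s < n" and "L (r, row_perm n L r s) = s"
proof -
  have "s \<in> (\<lambda>j. L (r, j)) ` {0..<n}"
    using bij_betw_imp_surj_on[OF latin_square_row_bij[OF L \<open>r < n\<close>]] \<open>s < n\<close> by simp
  then obtain j where "j < n" "L (r, j) = s" by auto
  then show "row_perm n L r s < n" and "L (r, row_perm n L r s) = s"
    using row_perm_eqI[OF L \<open>r < n\<close>] by auto
qed

lemma col_perm_spec:
  assumes L: "latin_square n L" and "c < n" "s < n"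
  shows "col_perm n L c s < n" and "L (col_perm n L c s, c) = s"
proof -
  have "s \<in> (\<lambda>i. L (i, c)) ` {0..<n}"
    using bij_betw_imp_surj_on[OF latin_square_col_bij[OF L \<open>c < n\<close>]] \<open>s < n\<close> by simp
  then obtain i where "i < n" "L (i, c) = s" by auto
  then show "col_perm n L c s < n" and "L (col_perm n L c s, c) = s"
    using col_perm_eqI[OF L \<open>c < n\<close>] by auto
qed

lemma row_perm_permutes:
  assumes L: "latin_square n L" and r: "r < n"
  shows "row_perm n L r permutes {0..<n}"
proof (rule bij_imp_permutes)
  show "bij_betw (row_perm n L r) {0..<n} {0..<n}"
    by (rule bij_betw_byWitness[where f' = "\<lambda>j. L (r, j)"])
      (use row_perm_spec[OF L r] row_perm_eqI[OF L r] latin_square_less[OF L r] in auto)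
qed (simp add: row_perm_def)

lemma col_perm_permutes:
  assumes L: "latin_square n L" and c: "c < n"
  shows "col_perm n L c permutes {0..<n}"
proof (rule bij_imp_permutes)
  show "bij_betw (col_perm n L c) {0..<n} {0..<n}"
    by (rule bij_betw_byWitness[where f' = "\<lambda>i. L (i, c)"])
      (use col_perm_spec[OF L c] col_perm_eqI[OF L c] latin_square_less[OF L _ c] in auto)
qed (simp add: col_perm_def)

lemma row_perm_zero_reduced:
  assumes "latin_square n L" "reduced n L"
  shows "row_perm n L 0 = id"
proof
  fix s
  show "row_perm n L 0 s = id s"
    using assms row_perm_eqI[of n L 0 s s] by (cases "s < n") (auto simp: reduced_def row_perm_def)
qed

lemma col_perm_zero_reduced:
  assumes "latin_square n L" "reduced n L"
  shows "col_perm n L 0 = id"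
proof
  fix s
  show "col_perm n L 0 s = id s"
    using assms col_perm_eqI[of n L 0 s s] by (cases "s < n") (auto simp: reduced_def col_perm_def)
qed

definition isotope :: "nat \<Rightarrow> (nat \<times> nat \<Rightarrow> nat) \<Rightarrow> (nat \<Rightarrow> nat) \<Rightarrow> (nat \<Rightarrow> nat) \<Rightarrow>
    (nat \<Rightarrow> nat) \<Rightarrow> nat \<times> nat \<Rightarrow> nat"
  where "isotope n L \<alpha> \<beta> \<gamma> =
    (\<lambda>(a, b). if a < n \<and> b < n then \<gamma> (L (\<alpha> a, \<beta> b)) else undefined)"

lemma isotope_apply: "a < n \<Longrightarrow> b < n \<Longrightarrow> isotope n L \<alpha> \<beta> \<gamma> (a, b) = \<gamma> (L (\<alpha> a, \<beta> b))"
  by (simp add: isotope_def)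

lemma permutes_less: "p permutes {0..<n} \<Longrightarrow> x < n \<Longrightarrow> p x < (n::nat)"
  using permutes_in_image[of p "{0..<n}" x] by simp

lemma latin_square_isotope:
  assumes L: "latin_square n L"
    and p: "\<alpha> permutes {0..<n}" "\<beta> permutes {0..<n}" "\<gamma> permutes {0..<n}"
  shows "latin_square n (isotope n L \<alpha> \<beta> \<gamma>)"
  unfolding latin_square_def
proof (intro conjI allI impI)
  show "isotope n L \<alpha> \<beta> \<gamma> \<in> {0..<n} \<times> {0..<n} \<rightarrow>\<^sub>E {0..<n}"
    using permutes_less[OF p(1)] permutes_less[OF p(2)] permutes_less[OF p(3)]
      latin_square_less[OF L]
    by (auto simp: isotope_def PiE_def Pi_def extensional_def)
next
  fix r assume r: "r < n"
  have "bij_betw (\<gamma> \<circ> (\<lambda>j. L (\<alpha> r, j)) \<circ> \<beta>) {0..<n} {0..<n}"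
    using permutes_imp_bij[OF p(2)] latin_square_row_bij[OF L permutes_less[OF p(1) r]]
      permutes_imp_bij[OF p(3)]
    by (meson bij_betw_trans)
  then show "bij_betw (\<lambda>j. isotope n L \<alpha> \<beta> \<gamma> (r, j)) {0..<n} {0..<n}"
    by (rule bij_betw_cong[THEN iffD1, rotated]) (use r in \<open>auto simp: isotope_apply\<close>)
next
  fix c assume c: "c < n"
  have "bij_betw (\<gamma> \<circ> (\<lambda>i. L (i, \<beta> c)) \<circ> \<alpha>) {0..<n} {0..<n}"
    using permutes_imp_bij[OF p(1)] latin_square_col_bij[OF L permutes_less[OF p(2) c]]
      permutes_imp_bij[OF p(3)]
    by (meson bij_betw_trans)
  then show "bij_betw (\<lambda>i. isotope n L \<alpha> \<beta> \<gamma> (i, c)) {0..<n} {0..<n}"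
    by (rule bij_betw_cong[THEN iffD1, rotated]) (use c in \<open>auto simp: isotope_apply\<close>)
qed

lemma isotope_isotope:
  assumes "\<alpha>' permutes {0..<n}" "\<beta>' permutes {0..<n}"
  shows "isotope n (isotope n L \<alpha> \<beta> \<gamma>) \<alpha>' \<beta>' \<gamma>'
    = isotope n L (\<alpha> \<circ> \<alpha>') (\<beta> \<circ> \<beta>') (\<gamma>' \<circ> \<gamma>)" (is "?lhs = ?rhs")
proof (rule ext, clarify)
  fix a b
  show "?lhs (a, b) = ?rhs (a, b)"
    using permutes_less[OF assms(1), of a] permutes_less[OF assms(2), of b]
    by (simp add: isotope_def)
qed

lemma isotope_id:
  assumes "latin_square n L"
  shows "isotope n L id id id = L"
proof (rule ext, clarify)
  fix a b
  show "isotope n L id id id (a, b) = L (a, b)"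
    using latin_square_undefined[OF assms, of a b] by (simp add: isotope_def)
qed

lemma row_perm_isotope:
  assumes L: "latin_square n L"
    and p: "\<alpha> permutes {0..<n}" "\<beta> permutes {0..<n}" "\<gamma> permutes {0..<n}" and r: "r < n"
  shows "row_perm n (isotope n L \<alpha> \<beta> \<gamma>) r = inv \<beta> \<circ> row_perm n L (\<alpha> r) \<circ> inv \<gamma>"
proof
  fix s
  show "row_perm n (isotope n L \<alpha> \<beta> \<gamma>) r s = (inv \<beta> \<circ> row_perm n L (\<alpha> r) \<circ> inv \<gamma>) s"
  proof (cases "s < n")
    case True
    let ?j = "row_perm n L (\<alpha> r) (inv \<gamma> s)"
    have j: "?j < n" "L (\<alpha> r, ?j) = inv \<gamma> s"
      using row_perm_spec[OF L permutes_less[OF p(1) r]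
          permutes_less[OF permutes_inv[OF p(3)] True]]
      by auto
    show ?thesis
      by (rule row_perm_eqI[OF latin_square_isotope[OF L p] r])
        (use j permutes_less[OF permutes_inv[OF p(2)]] r in
          \<open>simp_all add: isotope_apply permutes_inverses[OF p(2)] permutes_inverses[OF p(3)]\<close>)
  next
    case False
    then show ?thesis
      using permutes_not_in[OF permutes_inv[OF p(2)]] permutes_not_in[OF permutes_inv[OF p(3)]]
      by (simp add: row_perm_def)
  qed
qed

lemma col_perm_isotope:
  assumes L: "latin_square n L"
    and p: "\<alpha> permutes {0..<n}" "\<beta> permutes {0..<n}" "\<gamma> permutes {0..<n}" and c: "c < n"
  shows "col_perm n (isotope n L \<alpha> \<beta> \<gamma>) c = inv \<alpha> \<circ> col_perm n L (\<beta> c) \<circ> inv \<gamma>"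
proof
  fix s
  show "col_perm n (isotope n L \<alpha> \<beta> \<gamma>) c s = (inv \<alpha> \<circ> col_perm n L (\<beta> c) \<circ> inv \<gamma>) s"
  proof (cases "s < n")
    case True
    let ?i = "col_perm n L (\<beta> c) (inv \<gamma> s)"
    have i: "?i < n" "L (?i, \<beta> c) = inv \<gamma> s"
      using col_perm_spec[OF L permutes_less[OF p(2) c]
          permutes_less[OF permutes_inv[OF p(3)] True]]
      by auto
    show ?thesis
      by (rule col_perm_eqI[OF latin_square_isotope[OF L p] c])
        (use i permutes_less[OF permutes_inv[OF p(1)]] c in
          \<open>simp_all add: isotope_apply permutes_inverses[OF p(1)] permutes_inverses[OF p(3)]\<close>)
  next
    case False
    then show ?thesis
      using permutes_not_in[OF permutes_inv[OF p(1)]] permutes_not_in[OF permutes_inv[OF p(3)]]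
      by (simp add: col_perm_def)
  qed
qed

lemma sign_inv_comp_comp_inv:
  assumes "p permutes S" "q permutes S" "r permutes S" "finite S"
  shows "sign (inv p \<circ> q \<circ> inv r) = sign p * sign q * sign r"
proof -
  have perm: "permutation p" "permutation q" "permutation r"
    using assms permutes_imp_permutation by blast+
  then show ?thesis
    by (simp add: sign_compose permutation_compose permutation_inverse sign_inverse)
qed

lemma par_isotope:
  assumes L: "latin_square n L"
    and p: "\<alpha> permutes {0..<n}" "\<beta> permutes {0..<n}" "\<gamma> permutes {0..<n}"
  shows "par n (isotope n L \<alpha> \<beta> \<gamma>) = (sign \<beta> * sign \<gamma>) ^ n * (sign \<alpha> * sign \<gamma>) ^ n * par n L"
proof -
  have rows: "(\<Prod>r<n. sign (row_perm n (isotope n L \<alpha> \<beta> \<gamma>) r))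
      = (\<Prod>r<n. sign \<beta> * sign \<gamma> * sign (row_perm n L (\<alpha> r)))"
    by (rule prod.cong) (auto simp: row_perm_isotope[OF L p] permutes_less[OF p(1)]
        sign_inv_comp_comp_inv[OF p(2) row_perm_permutes[OF L] p(3)])
  have cols: "(\<Prod>c<n. sign (col_perm n (isotope n L \<alpha> \<beta> \<gamma>) c))
      = (\<Prod>c<n. sign \<alpha> * sign \<gamma> * sign (col_perm n L (\<beta> c)))"
    by (rule prod.cong) (auto simp: col_perm_isotope[OF L p] permutes_less[OF p(2)]
        sign_inv_comp_comp_inv[OF p(1) col_perm_permutes[OF L] p(3)])
  have "(\<Prod>r<n. sign (row_perm n L (\<alpha> r))) = (\<Prod>r<n. sign (row_perm n L r))"
    using prod.reindex_bij_betw[OF permutes_imp_bij[OF p(1)]] by (simp add: lessThan_atLeast0)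
  moreover have "(\<Prod>c<n. sign (col_perm n L (\<beta> c))) = (\<Prod>c<n. sign (col_perm n L c))"
    using prod.reindex_bij_betw[OF permutes_imp_bij[OF p(2)]] by (simp add: lessThan_atLeast0)
  ultimately show ?thesis
    unfolding par_def rows cols prod.distrib by (simp add: algebra_simps)
qed

definition recentre_sym :: "(nat \<times> nat \<Rightarrow> nat) \<Rightarrow> nat \<Rightarrow> nat \<Rightarrow> nat \<Rightarrow> nat"
  where "recentre_sym R i j = transpose 0 (R (i, j))"

definition recentre_rows :: "nat \<Rightarrow> (nat \<times> nat \<Rightarrow> nat) \<Rightarrow> nat \<Rightarrow> nat \<Rightarrow> nat \<Rightarrow> nat"
  where "recentre_rows n R i j = col_perm n R j \<circ> recentre_sym R i j"

definition recentre_cols :: "nat \<Rightarrow> (nat \<times> nat \<Rightarrow> nat) \<Rightarrow> nat \<Rightarrow> nat \<Rightarrow> nat \<Rightarrow> nat"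
  where "recentre_cols n R i j = row_perm n R i \<circ> recentre_sym R i j"

definition recentre :: "nat \<Rightarrow> (nat \<times> nat \<Rightarrow> nat) \<Rightarrow> nat \<Rightarrow> nat \<Rightarrow> nat \<times> nat \<Rightarrow> nat"
  where "recentre n R i j =
    isotope n R (recentre_rows n R i j) (recentre_cols n R i j) (recentre_sym R i j)"

locale reduced_cell =
  fixes n :: nat and R :: "nat \<times> nat \<Rightarrow> nat" and i j :: nat
  assumes latin: "latin_square n R" and reduced: "reduced n R" and row: "i < n" and col: "j < n"
begin

lemma recentre_sym_permutes: "recentre_sym R i j permutes {0..<n}"
  unfolding recentre_sym_def
  by (rule permutes_swap_id) (use latin_square_less[OF latin row col] row in auto)

lemma recentre_rows_permutes: "recentre_rows n R i j permutes {0..<n}"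
  unfolding recentre_rows_def
  by (rule permutes_compose[OF recentre_sym_permutes col_perm_permutes[OF latin col]])

lemma recentre_cols_permutes: "recentre_cols n R i j permutes {0..<n}"
  unfolding recentre_cols_def
  by (rule permutes_compose[OF recentre_sym_permutes row_perm_permutes[OF latin row]])

lemma recentre_rows_zero: "recentre_rows n R i j 0 = i"
  by (simp add: recentre_rows_def recentre_sym_def col_perm_eqI[OF latin col row])

lemma recentre_cols_zero: "recentre_cols n R i j 0 = j"
  by (simp add: recentre_cols_def recentre_sym_def row_perm_eqI[OF latin row col])

lemma latin_square_recentre: "latin_square n (recentre n R i j)"
  unfolding recentre_def
  by (rule latin_square_isotope[OF latin recentre_rows_permutes recentre_cols_permutes
        recentre_sym_permutes])

lemma reduced_recentre: "reduced n (recentre n R i j)"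
  unfolding reduced_def
proof (intro conjI allI impI)
  fix b assume b: "b < n"
  have "recentre_sym R i j b < n" by (rule permutes_less[OF recentre_sym_permutes b])
  then show "recentre n R i j (0, b) = b"
    using b row row_perm_spec(2)[OF latin row]
    by (simp add: recentre_def isotope_apply recentre_rows_zero recentre_cols_def recentre_sym_def)
next
  fix a assume a: "a < n"
  have "recentre_sym R i j a < n" by (rule permutes_less[OF recentre_sym_permutes a])
  then show "recentre n R i j (a, 0) = a"
    using a col col_perm_spec(2)[OF latin col]
    by (simp add: recentre_def isotope_apply recentre_cols_zero recentre_rows_def recentre_sym_def)
qed

lemma par_recentre:
  assumes "odd n"
  shows "par n (recentre n R i j) = sign (row_perm n R i) * sign (col_perm n R j) * par n R"
proof -
  have perm: "permutation (recentre_sym R i j)" "permutation (row_perm n R i)"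
      "permutation (col_perm n R j)"
    using permutes_imp_permutation[OF _ recentre_sym_permutes]
      permutes_imp_permutation[OF _ row_perm_permutes[OF latin row]]
      permutes_imp_permutation[OF _ col_perm_permutes[OF latin col]] by auto
  \<comment> \<open>The symbol relabelling enters all \<open>2n\<close> row and column signs, so its sign cancels.\<close>
  have "sign (recentre_sym R i j) * sign (recentre_sym R i j) = 1"
    by (simp add: sign_idempotent)
  moreover have "sign (row_perm n R i) ^ n = sign (row_perm n R i)"
      "sign (col_perm n R j) ^ n = sign (col_perm n R j)"
    using assms by (simp_all add: sign_def)
  ultimately show ?thesis
    unfolding recentre_def par_isotope[OF latin recentre_rows_permutes recentre_cols_permutes
        recentre_sym_permutes]
    by (simp add: recentre_rows_def recentre_cols_def sign_compose perm power_mult_distrib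
        algebra_simps)
qed

lemma recentre_recentre:
  defines "i' \<equiv> inv (recentre_rows n R i j) 0" and "j' \<equiv> inv (recentre_cols n R i j) 0"
  shows "recentre n (recentre n R i j) i' j' = R"
    and "inv (recentre_rows n (recentre n R i j) i' j') 0 = i"
    and "inv (recentre_cols n (recentre n R i j) i' j') 0 = j"
proof -
  let ?R' = "recentre n R i j" and ?\<alpha> = "recentre_rows n R i j"
    and ?\<beta> = "recentre_cols n R i j" and ?\<gamma> = "recentre_sym R i j"
  have n: "0 < n" using row by simp
  have i': "i' < n" "?\<alpha> i' = 0"
    unfolding i'_def using permutes_less[OF permutes_inv[OF recentre_rows_permutes] n]
    by (simp_all add: permutes_inverses[OF recentre_rows_permutes])
  have j': "j' < n" "?\<beta> j' = 0"
    unfolding j'_def using permutes_less[OF permutes_inv[OF recentre_cols_permutes] n]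
    by (simp_all add: permutes_inverses[OF recentre_cols_permutes])
  have "?R' (i', j') = ?\<gamma> (R (0, 0))"
    using i' j' by (simp add: recentre_def isotope_apply)
  then have sym': "recentre_sym ?R' i' j' = ?\<gamma>"
    using reduced n by (simp add: reduced_def recentre_sym_def)
  \<comment> \<open>Column \<open>j'\<close> (row \<open>i'\<close>) of the recentred square is the relabelled column (row) \<open>0\<close>
    of \<open>R\<close>, so the second recentring undoes the relabellings of the first.\<close>
  have rows': "recentre_rows n ?R' i' j' = inv ?\<alpha>"
  proof -
    have "recentre_rows n ?R' i' j' = col_perm n ?R' j' \<circ> ?\<gamma>"
      by (simp only: recentre_rows_def sym')
    also have "\<dots> = inv ?\<alpha> \<circ> col_perm n R 0 \<circ> (inv ?\<gamma> \<circ> ?\<gamma>)"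
      unfolding recentre_def col_perm_isotope[OF latin recentre_rows_permutes recentre_cols_permutes
          recentre_sym_permutes j'(1)]
      by (simp add: j'(2) o_assoc)
    finally show ?thesis
      by (simp add: col_perm_zero_reduced[OF latin reduced]
          permutes_inv_o[OF recentre_sym_permutes])
  qed
  have cols': "recentre_cols n ?R' i' j' = inv ?\<beta>"
  proof -
    have "recentre_cols n ?R' i' j' = row_perm n ?R' i' \<circ> ?\<gamma>"
      by (simp only: recentre_cols_def sym')
    also have "\<dots> = inv ?\<beta> \<circ> row_perm n R 0 \<circ> (inv ?\<gamma> \<circ> ?\<gamma>)"
      unfolding recentre_def row_perm_isotope[OF latin recentre_rows_permutes recentre_cols_permutes
          recentre_sym_permutes i'(1)]
      by (simp add: i'(2) o_assoc)
    finally show ?thesis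
      by (simp add: row_perm_zero_reduced[OF latin reduced]
          permutes_inv_o[OF recentre_sym_permutes])
  qed
  show "recentre n ?R' i' j' = R"
    unfolding recentre_def[of n ?R'] rows' cols' sym'
    by (simp add: recentre_def isotope_isotope permutes_inv recentre_rows_permutes
        recentre_cols_permutes permutes_inv_o(1)[OF recentre_rows_permutes]
        permutes_inv_o(1)[OF recentre_cols_permutes] recentre_sym_def isotope_id[OF latin])
  show "inv (recentre_rows n ?R' i' j') 0 = i"
    by (simp add: rows' permutes_inv_inv[OF recentre_rows_permutes] recentre_rows_zero)
  show "inv (recentre_cols n ?R' i' j') 0 = j"
    by (simp add: cols' permutes_inv_inv[OF recentre_cols_permutes] recentre_cols_zero)
qed

end

lemma reduced_latin_squares_iff: "L \<in> reduced_latin_squares n \<longleftrightarrow> latin_square n L \<and> reduced n L"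
  by (simp add: reduced_latin_squares_def)

lemma finite_reduced_latin_squares: "finite (reduced_latin_squares n)"
proof (rule finite_subset)
  show "reduced_latin_squares n \<subseteq> ({0..<n} \<times> {0..<n}) \<rightarrow>\<^sub>E {0..<n}"
    by (auto simp: reduced_latin_squares_def latin_square_def)
qed (intro finite_PiE; simp)

text \<open>The old origin ends up in cell \<open>(inv \<alpha> 0, inv \<beta> 0)\<close> of the recentred square, where
  \<open>\<alpha>\<close> and \<open>\<beta>\<close> are the row and column relabellings.\<close>

definition recentre_triple ::
    "nat \<Rightarrow> (nat \<times> nat \<Rightarrow> nat) \<times> nat \<times> nat \<Rightarrow> (nat \<times> nat \<Rightarrow> nat) \<times> nat \<times> nat"
  where "recentre_triple n = (\<lambda>(R, i, j).
    (recentre n R i j, inv (recentre_rows n R i j) 0, inv (recentre_cols n R i j) 0))"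

lemma recentre_triple_involution:
  assumes "t \<in> reduced_latin_squares n \<times> {..<n} \<times> {..<n}"
  shows "recentre_triple n t \<in> reduced_latin_squares n \<times> {..<n} \<times> {..<n}"
    and "recentre_triple n (recentre_triple n t) = t"
proof -
  obtain R i j where t: "t = (R, i, j)" and "reduced_cell n R i j"
    using assms by (auto simp: reduced_cell_def reduced_latin_squares_iff)
  then interpret reduced_cell n R i j by simp
  have "0 < n" using row by simp
  then show "recentre_triple n t \<in> reduced_latin_squares n \<times> {..<n} \<times> {..<n}"
    using latin_square_recentre reduced_recentre
      permutes_less[OF permutes_inv[OF recentre_rows_permutes]]
      permutes_less[OF permutes_inv[OF recentre_cols_permutes]]
    by (simp add: t recentre_triple_def reduced_latin_squares_iff)
  show "recentre_triple n (recentre_triple n t) = t"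
    using recentre_recentre by (simp add: t recentre_triple_def)
qed

definition row_sign_sum :: "nat \<Rightarrow> (nat \<times> nat \<Rightarrow> nat) \<Rightarrow> int"
  where "row_sign_sum n L = (\<Sum>r<n. sign (row_perm n L r))"

definition col_sign_sum :: "nat \<Rightarrow> (nat \<times> nat \<Rightarrow> nat) \<Rightarrow> int"
  where "col_sign_sum n L = (\<Sum>c<n. sign (col_perm n L c))"

lemma sum_par_mult_sign_sums:
  assumes "odd n"
  shows "(\<Sum>L\<in>reduced_latin_squares n. par n L * row_sign_sum n L * col_sign_sum n L)
    = int n ^ 2 * (\<Sum>L\<in>reduced_latin_squares n. par n L)"
proof -
  let ?T = "reduced_latin_squares n \<times> {..<n} \<times> {..<n}"
  have "bij_betw (recentre_triple n) ?T ?T"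
    using recentre_triple_involution[of _ n]
    by (intro bij_betw_byWitness[where f' = "recentre_triple n"]) blast+
  then have "(\<Sum>t\<in>?T. par n (fst (recentre_triple n t))) = (\<Sum>t\<in>?T. par n (fst t))"
    by (rule sum.reindex_bij_betw)
  moreover have "(\<Sum>t\<in>?T. par n (fst (recentre_triple n t)))
    = (\<Sum>L\<in>reduced_latin_squares n. \<Sum>i<n. \<Sum>j<n.
        sign (row_perm n L i) * sign (col_perm n L j) * par n L)"
  proof -
    have "par n (fst (recentre_triple n (L, i, j)))
        = sign (row_perm n L i) * sign (col_perm n L j) * par n L"
      if "(L, i, j) \<in> ?T" for L i j
    proof -
      interpret reduced_cell n L i j
        using that by unfold_locales (auto simp: reduced_latin_squares_iff)
      show ?thesis using par_recentre[OF assms] by (simp add: recentre_triple_def)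
    qed
    then show ?thesis
      by (auto simp add: sum.cartesian_product' intro!: sum.cong)
  qed
  ultimately show ?thesis
    by (simp add: sum.cartesian_product' row_sign_sum_def col_sign_sum_def sum_product
        sum_distrib_left power2_eq_square algebra_simps)
qed

lemma
  fixes g :: "'a \<Rightarrow> int"
  assumes "finite A" and pm: "\<forall>x\<in>A. g x = 1 \<or> g x = -1"
  shows card_plus_minus_one: "card {x\<in>A. g x = 1} + card {x\<in>A. g x = -1} = card A"
    and sum_plus_minus_one: "(\<Sum>x\<in>A. g x) = int (card {x\<in>A. g x = 1}) - int (card {x\<in>A. g x = -1})"
    and prod_plus_minus_one: "(\<Prod>x\<in>A. g x) = (-1) ^ card {x\<in>A. g x = -1}"
proof -
  have "{x\<in>A. g x = 1} \<union> {x\<in>A. g x = -1} = A" using pm by auto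
  moreover have "card ({x\<in>A. g x = 1} \<union> {x\<in>A. g x = -1})
      = card {x\<in>A. g x = 1} + card {x\<in>A. g x = -1}"
    using \<open>finite A\<close> by (intro card_Un_disjoint) auto
  ultimately show "card {x\<in>A. g x = 1} + card {x\<in>A. g x = -1} = card A" by simp
  have "(\<Sum>x\<in>A. g x) = (\<Sum>x\<in>A. (if g x = 1 then 1 else 0) - (if g x = -1 then 1 else 0))"
    using pm by (intro sum.cong) auto
  then show "(\<Sum>x\<in>A. g x) = int (card {x\<in>A. g x = 1}) - int (card {x\<in>A. g x = -1})"
    using \<open>finite A\<close> by (simp add: sum_subtractf flip: sum.inter_filter)
  have "(\<Prod>x\<in>A. g x) = (\<Prod>x\<in>A. if g x = -1 then -1 else 1)"
    using pm by (intro prod.cong) auto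
  then show "(\<Prod>x\<in>A. g x) = (-1) ^ card {x\<in>A. g x = -1}"
    using \<open>finite A\<close> by (simp flip: prod.inter_filter)
qed

definition signed_weight :: "nat \<Rightarrow> nat \<Rightarrow> int"
  where "signed_weight n k = (-1) ^ k * (int n - 2 * int k)"

lemma signed_weight_complement:
  assumes "odd n" "k \<le> n"
  shows "signed_weight n (n - k) = signed_weight n k"
proof -
  have "(-1::int) ^ (n - k) = - ((-1) ^ k)"
    using assms by (cases "even k") (simp_all add: even_diff_nat)
  then show ?thesis
    using assms(2) by (simp add: signed_weight_def of_nat_diff algebra_simps)
qed

lemma sign_prod_mult_sum:
  fixes g :: "nat \<Rightarrow> int"
  assumes "odd n" and pm: "\<forall>r<n. g r = 1 \<or> g r = -1"
  defines "e \<equiv> card {r. r < n \<and> g r = 1}"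
  shows "(\<Prod>r<n. g r) * (\<Sum>r<n. g r) = signed_weight n (min e (n - e))"
proof -
  define d where "d = card {r. r < n \<and> g r = -1}"
  have pm': "\<forall>r\<in>{..<n}. g r = 1 \<or> g r = -1" using pm by simp
  have sets: "{r \<in> {..<n}. g r = c} = {r. r < n \<and> g r = c}" for c by auto
  have "e + d = n"
    using card_plus_minus_one[OF finite_lessThan pm'] by (simp only: sets e_def d_def card_lessThan)
  moreover have "(\<Sum>r<n. g r) = int e - int d" "(\<Prod>r<n. g r) = (-1) ^ d"
    using sum_plus_minus_one[OF finite_lessThan pm'] prod_plus_minus_one[OF finite_lessThan pm']
    by (simp_all only: sets e_def d_def)
  ultimately have "(\<Prod>r<n. g r) * (\<Sum>r<n. g r) = signed_weight n d"
    by (auto simp: signed_weight_def)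
  also have "\<dots> = signed_weight n (min e (n - e))"
    using \<open>e + d = n\<close> signed_weight_complement[OF \<open>odd n\<close>, of d] by (auto simp: min_def)
  finally show ?thesis .
qed

definition even_rows :: "nat \<Rightarrow> (nat \<times> nat \<Rightarrow> nat) \<Rightarrow> nat"
  where "even_rows n L = card {r. r < n \<and> sign (row_perm n L r) = 1}"

definition even_cols :: "nat \<Rightarrow> (nat \<times> nat \<Rightarrow> nat) \<Rightarrow> nat"
  where "even_cols n L = card {c. c < n \<and> sign (col_perm n L c) = 1}"

definition parity_type_of :: "nat \<Rightarrow> (nat \<times> nat \<Rightarrow> nat) \<Rightarrow> nat \<times> nat"
  where "parity_type_of n L =
    (min (even_rows n L) (n - even_rows n L), min (even_cols n L) (n - even_cols n L))"

lemma sign_cases_int: "sign p = (1::int) \<or> sign p = -1"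
  by (cases p rule: sign_cases) auto

lemma par_mult_sign_sums:
  assumes "odd n"
  shows "par n L * row_sign_sum n L * col_sign_sum n L
    = signed_weight n (fst (parity_type_of n L)) * signed_weight n (snd (parity_type_of n L))"
proof -
  have rows: "(\<Prod>r<n. sign (row_perm n L r)) * row_sign_sum n L
      = signed_weight n (fst (parity_type_of n L))"
    unfolding row_sign_sum_def parity_type_of_def even_rows_def
    by (simp add: sign_prod_mult_sum[OF assms] sign_cases_int)
  have cols: "(\<Prod>c<n. sign (col_perm n L c)) * col_sign_sum n L
      = signed_weight n (snd (parity_type_of n L))"
    unfolding col_sign_sum_def parity_type_of_def even_cols_def
    by (simp add: sign_prod_mult_sum[OF assms] sign_cases_int)
  have "par n L * row_sign_sum n L * col_sign_sum n L
      = ((\<Prod>r<n. sign (row_perm n L r)) * row_sign_sum n L)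
        * ((\<Prod>c<n. sign (col_perm n L c)) * col_sign_sum n L)"
    by (simp add: par_def mult_ac)
  then show ?thesis by (simp only: rows cols)
qed

lemma card_Collect_less_conj_le: "card {r. r < n \<and> P r} \<le> n"
  using card_mono[of "{..<n}" "{r. r < n \<and> P r}"] by auto

lemma min_complement_iff:
  fixes n e k :: nat
  assumes "odd n" "e \<le> n" "2 * k < n"
  shows "e = k \<or> e = n - k \<longleftrightarrow> k = min e (n - e)"
  using assms by (auto simp: min_def elim!: oddE)

lemma min_complement_less:
  fixes n e :: nat
  shows "odd n \<Longrightarrow> 2 * min e (n - e) < n"
  by (auto simp: min_def elim!: oddE) presburger

lemma parity_type_iff:
  assumes "odd n" "2 * k < n" "2 * m < n"
  shows "parity_type n L k m \<longleftrightarrow> parity_type_of n L = (k, m)"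
proof -
  have rows: "card {r. r < n \<and> sign (row_perm n L r) = 1} = k
      \<or> card {r. r < n \<and> sign (row_perm n L r) = 1} = n - k
      \<longleftrightarrow> k = fst (parity_type_of n L)"
    unfolding parity_type_of_def even_rows_def
    by (simp add: min_complement_iff[OF assms(1) card_Collect_less_conj_le assms(2)])
  have cols: "card {c. c < n \<and> sign (col_perm n L c) = 1} = m
      \<or> card {c. c < n \<and> sign (col_perm n L c) = 1} = n - m
      \<longleftrightarrow> m = snd (parity_type_of n L)"
    unfolding parity_type_of_def even_cols_def
    by (simp add: min_complement_iff[OF assms(1) card_Collect_less_conj_le assms(3)])
  show ?thesis
    unfolding parity_type_def rows cols using assms(2,3) by (cases "parity_type_of n L") auto
qed

lemma sum_card_fibres:
  fixes f :: "'b \<Rightarrow> 'c::comm_semiring_1"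
  assumes "finite S" "finite T" "\<tau> ` S \<subseteq> T"
  shows "(\<Sum>y\<in>T. of_nat (card {x\<in>S. \<tau> x = y}) * f y) = (\<Sum>x\<in>S. f (\<tau> x))"
proof -
  have "(\<Sum>y\<in>T. of_nat (card {x\<in>S. \<tau> x = y}) * f y) = (\<Sum>y\<in>T. \<Sum>x\<in>{x\<in>S. \<tau> x = y}. f (\<tau> x))"
    by (intro sum.cong) auto
  also have "\<dots> = (\<Sum>x\<in>S. f (\<tau> x))"
    by (rule sum.group[OF assms])
  finally show ?thesis .
qed

lemma sum_parity_types:
  assumes "odd n"
  shows "(\<Sum>k\<in>{k. 2 * k < n}. \<Sum>m\<in>{m. 2 * m < n}.
        (-1) ^ (k + m) * (int n - 2 * int k) * (int n - 2 * int m) * int (N n k m))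
    = (\<Sum>L\<in>reduced_latin_squares n. par n L * row_sign_sum n L * col_sign_sum n L)"
proof -
  let ?K = "{k. 2 * k < n}"
  let ?w = "\<lambda>y. signed_weight n (fst y) * signed_weight n (snd y)"
  have "finite ?K" by (rule finite_subset[of _ "{..<n}"]) auto
  have "(-1) ^ (k + m) * (int n - 2 * int k) * (int n - 2 * int m) * int (N n k m)
      = int (card {L \<in> reduced_latin_squares n. parity_type_of n L = (k, m)}) * ?w (k, m)"
    if "k \<in> ?K" "m \<in> ?K" for k m
    using that parity_type_iff[OF assms, of k m]
    by (simp add: N_def signed_weight_def power_add mult_ac)
  then have "(\<Sum>k\<in>?K. \<Sum>m\<in>?K.
        (-1) ^ (k + m) * (int n - 2 * int k) * (int n - 2 * int m) * int (N n k m))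
      = (\<Sum>y\<in>?K \<times> ?K. int (card {L \<in> reduced_latin_squares n. parity_type_of n L = y}) * ?w y)"
    by (simp add: sum.cartesian_product case_prod_beta)
  also have "\<dots> = (\<Sum>L\<in>reduced_latin_squares n. ?w (parity_type_of n L))"
    using \<open>finite ?K\<close> min_complement_less[OF assms]
    by (intro sum_card_fibres finite_reduced_latin_squares) (auto simp: parity_type_of_def)
  also have "\<dots> = (\<Sum>L\<in>reduced_latin_squares n. par n L * row_sign_sum n L * col_sign_sum n L)"
    by (simp add: par_mult_sign_sums[OF assms])
  finally show ?thesis .
qed

lemma prod_sign_cases: "(\<Prod>x\<in>A. sign (f x)) = (1::int) \<or> (\<Prod>x\<in>A. sign (f x)) = -1"
proof (induction A rule: infinite_finite_induct)
  case (insert x F)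
  then show ?case by (cases "f x" rule: sign_cases) auto
qed auto

lemma par_cases: "par n L = 1 \<or> par n L = -1"
  unfolding par_def
  using prod_sign_cases[of "row_perm n L" "{..<n}"] prod_sign_cases[of "col_perm n L" "{..<n}"]
  by auto

lemma sum_par_eq_card_diff:
  "(\<Sum>L\<in>reduced_latin_squares n. par n L) = int (card (RELS n)) - int (card (ROLS n))"
proof -
  have "reduced_latin_squares n = RELS n \<union> ROLS n"
    using par_cases unfolding RELS_def ROLS_def by auto
  moreover have "RELS n \<inter> ROLS n = {}" "finite (RELS n)" "finite (ROLS n)"
    using finite_reduced_latin_squares by (auto simp: RELS_def ROLS_def)
  ultimately have "(\<Sum>L\<in>reduced_latin_squares n. par n L)
      = (\<Sum>L\<in>RELS n. par n L) + (\<Sum>L\<in>ROLS n. par n L)"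
    by (simp add: sum.union_disjoint)
  also have "\<dots> = (\<Sum>L\<in>RELS n. 1) + (\<Sum>L\<in>ROLS n. -1)"
    by (intro arg_cong2[where f = "(+)"] sum.cong) (auto simp: RELS_def ROLS_def)
  finally show ?thesis by simp
qed

theorem proposition3p3:
  fixes n :: nat
  assumes "odd n"
  shows "card (RELS n) \<noteq> card (ROLS n) \<longleftrightarrow>
    (\<Sum>k\<in>{k. 2 * k < n}. \<Sum>m\<in>{m. 2 * m < n}.
        (-1) ^ (k + m) * (int n - 2 * int k) * (int n - 2 * int m) * int (N n k m)) \<noteq> 0"
proof -
  have "int n ^ 2 \<noteq> 0" using assms by (cases n) auto
  then show ?thesis
    unfolding sum_parity_types[OF assms] sum_par_mult_sign_sums[OF assms] sum_par_eq_card_diff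
    by simp
qed

end
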